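(* Let $x=(x_n)_{n\in\mathbb{Z}}$ be an integer-valued sequence. For every $i\in\mathbb{Z}$, the set of descendants of $R_x(i)$ in the record graph of $x$ contains $\{j\in\mathbb{Z}: i\le j\le R_x(i)\}$.
   Context: The record map is $R_x(i)=\inf\{n>i: \sum_{l=i}^{n-1}x_l\ge0\}$ if this set is nonempty, and $R_x(i)=i$ otherwise; the record graph has vertex set $\mathbb{Z}$ and directed edges $i\to R_x(i)$ for $R_x(i)\neq i$. The set of descendants of $v$ is $D(v)=\{v\}\cup\{j\ne v: R_x^n(j)=v\text{ for some }n\ge1\}$. *)

theory Defs
  imports Main
begin

definition record_map :: "(int \<Rightarrow> int) \<Rightarrow> int \<Rightarrow> int" where
  "record_map x i =
     (if {n. n > i \<and> (\<Sum>l\<in>{i..<n}. x l) \<ge> 0} \<noteq> {}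
      then (LEAST n. n > i \<and> (\<Sum>l\<in>{i..<n}. x l) \<ge> 0)
      else i)"

text \<open>Descendants of v in the record graph (edges i -> R_x(i) for R_x(i) \<noteq> i).\<close>
definition descendants :: "(int \<Rightarrow> int) \<Rightarrow> int \<Rightarrow> int set" where
  "descendants x v = {v} \<union> {j. j \<noteq> v \<and> (\<exists>n::nat. n \<ge> 1 \<and> (record_map x ^^ n) j = v)}"

end

theory Submission
  imports Defs
begin

text \<open>Let r = R(i) > i. By minimality of r, the partial sums x(i) + ... + x(j-1) are negative
  for i < j < r, while x(i) + ... + x(r-1) \<ge> 0; subtracting, x(j) + ... + x(r-1) \<ge> 0, so
  j < R(j) \<le> r for every i \<le> j < r. Iterating R from any j in [i, r] therefore climbs strictly
  inside [i, r] and must reach r.\<close>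

lemma int_Least_bounded_below:
  fixes P :: "int \<Rightarrow> bool"
  assumes "P n" and bound: "\<And>m. P m \<Longrightarrow> b \<le> m"
  shows "P (LEAST m. P m)" and "\<And>m. P m \<Longrightarrow> (LEAST m. P m) \<le> m"
proof -
  define S where "S = {b..n} \<inter> {m. P m}"
  have "finite S" and "n \<in> S"
    using assms by (auto simp: S_def)
  then have Min_mem: "Min S \<in> S" and Min_le_n: "Min S \<le> n"
    by (auto intro: Min_in)
  have Min_least: "Min S \<le> m" if "P m" for m
  proof (cases "m \<le> n")
    case True
    with \<open>P m\<close> bound have "m \<in> S" by (auto simp: S_def)
    with \<open>finite S\<close> show ?thesis by simp
  next
    case False
    with Min_le_n show ?thesis by simp
  qed
  have "(LEAST m. P m) = Min S"
    using Min_mem Min_least by (intro Least_equality) (auto simp: S_def)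
  with Min_mem Min_least show "P (LEAST m. P m)" and "\<And>m. P m \<Longrightarrow> (LEAST m. P m) \<le> m"
    by (auto simp: S_def)
qed

lemma record_map_least:
  assumes "i < n" and "0 \<le> (\<Sum>l\<in>{i..<n}. x l)"
  shows record_map_gt: "i < record_map x i"
    and "0 \<le> (\<Sum>l\<in>{i..<record_map x i}. x l)"
    and record_map_le: "\<And>m. i < m \<Longrightarrow> 0 \<le> (\<Sum>l\<in>{i..<m}. x l) \<Longrightarrow> record_map x i \<le> m"
proof -
  let ?P = "\<lambda>m. i < m \<and> 0 \<le> (\<Sum>l\<in>{i..<m}. x l)"
  have "record_map x i = (LEAST m. ?P m)"
    using assms by (auto simp: record_map_def)
  moreover have "?P (LEAST m. ?P m)" and "\<And>m. ?P m \<Longrightarrow> (LEAST m. ?P m) \<le> m"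
    using int_Least_bounded_below[of ?P n i] assms by auto
  ultimately show "i < record_map x i" and "0 \<le> (\<Sum>l\<in>{i..<record_map x i}. x l)"
    and "\<And>m. i < m \<Longrightarrow> 0 \<le> (\<Sum>l\<in>{i..<m}. x l) \<Longrightarrow> record_map x i \<le> m"
    by auto
qed

lemma record_map_gt_imp_record:
  assumes "i < record_map x i"
  shows "0 \<le> (\<Sum>l\<in>{i..<record_map x i}. x l)"
    and "\<And>m. i < m \<Longrightarrow> m < record_map x i \<Longrightarrow> (\<Sum>l\<in>{i..<m}. x l) < 0"
proof -
  obtain n where "i < n" and "0 \<le> (\<Sum>l\<in>{i..<n}. x l)"
    using assms by (auto simp: record_map_def split: if_splits)
  then show "0 \<le> (\<Sum>l\<in>{i..<record_map x i}. x l)"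
    and "\<And>m. i < m \<Longrightarrow> m < record_map x i \<Longrightarrow> (\<Sum>l\<in>{i..<m}. x l) < 0"
    using record_map_least[of i n x] by (auto simp: not_le[symmetric])
qed

lemma record_map_within:
  assumes "i \<le> j" and "j < record_map x i"
  shows "j < record_map x j \<and> record_map x j \<le> record_map x i"
proof -
  let ?r = "record_map x i"
  have "i < ?r" using assms by simp
  have "0 \<le> (\<Sum>l\<in>{j..<?r}. x l)"
  proof (cases "j = i")
    case True
    with record_map_gt_imp_record(1)[OF \<open>i < ?r\<close>] show ?thesis by simp
  next
    case False
    with assms have "(\<Sum>l\<in>{i..<j}. x l) < 0"
      using record_map_gt_imp_record(2)[OF \<open>i < ?r\<close>] by simp
    moreover have "(\<Sum>l\<in>{i..<?r}. x l) = (\<Sum>l\<in>{i..<j}. x l) + (\<Sum>l\<in>{j..<?r}. x l)"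
      using assms by (simp add: sum.union_disjoint[symmetric] ivl_disj_un)
    ultimately show ?thesis
      using record_map_gt_imp_record(1)[OF \<open>i < ?r\<close>] by linarith
  qed
  with \<open>j < ?r\<close> show ?thesis
    using record_map_gt record_map_le by blast
qed

lemma funpow_reaches_upper_bound:
  fixes f :: "int \<Rightarrow> int"
  assumes step: "\<And>j. i \<le> j \<Longrightarrow> j < r \<Longrightarrow> j < f j \<and> f j \<le> r"
    and "i \<le> j" and "j \<le> r"
  shows "\<exists>n. (f ^^ n) j = r"
  using assms(2,3)
proof (induction "nat (r - j)" arbitrary: j rule: less_induct)
  case less
  show ?case
  proof (cases "j = r")
    case True
    then show ?thesis by (metis funpow_0)
  next
    case False
    with less.prems have "j < r" by simp
    with step less.prems have "j < f j" and "f j \<le> r" by auto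
    then obtain n where "(f ^^ n) (f j) = r"
      using less.hyps[of "f j"] less.prems by auto
    then have "(f ^^ Suc n) j = r"
      by (simp only: funpow_Suc_right comp_apply)
    then show ?thesis ..
  qed
qed

lemma funpow_in_descendants:
  assumes "(record_map x ^^ n) j = v"
  shows "j \<in> descendants x v"
  using assms by (cases n) (auto simp: descendants_def)

theorem lemma2p17:
  fixes x :: "int \<Rightarrow> int" and i :: int
  shows "{j. i \<le> j \<and> j \<le> record_map x i} \<subseteq> descendants x (record_map x i)"
proof
  fix j
  assume "j \<in> {j. i \<le> j \<and> j \<le> record_map x i}"
  then have "\<exists>n. (record_map x ^^ n) j = record_map x i"
    using funpow_reaches_upper_bound[of i "record_map x i" "record_map x"] record_map_within
    by auto
  then show "j \<in> descendants x (record_map x i)"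
    using funpow_in_descendants by blast
qed

end
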